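(* Let $(P_i)_{i\ge0}$ be any walk in $\mathbb Z^2$ (in particular an $\alpha$-random walk), $k\ge1$, $m\ge1$ integers. For $i\ge1$ let $X_i=1$ if $P_i$ is visible (else $0$), $X_i(m)=1$ if $P_i$ is visible at level $m$ (else $0$), $Z_i(m)=X_i(m)-X_i$, and set $$\overline S_{n,k}=\frac1n\sum_{i=1}^n X_i\cdots X_{i+k-1},\quad \overline S_{n,k}(m)=\frac1n\sum_{i=1}^n X_i(m)\cdots X_{i+k-1}(m),\quad \overline Z_n(m)=\frac1n\sum_{i=1}^n Z_i(m).$$ Then for every $n\ge1$, $$\overline S_{n,k}(m)-k\overline Z_n(m)-\frac{k^2}{2n}\le\overline S_{n,k}\le\overline S_{n,k}(m).$$
   Context: A lattice point $(a,b)$ is visible if $\gcd(a,b)=1$, and visible at level $m$ if no prime $p<m$ divides both $a$ and $b$. *)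

theory Defs
  imports "HOL-Computational_Algebra.Primes" Complex_Main
begin

definition visible :: "int \<times> int \<Rightarrow> bool" where
  "visible P \<longleftrightarrow> gcd (fst P) (snd P) = 1"

definition visible_at :: "nat \<Rightarrow> int \<times> int \<Rightarrow> bool" where
  "visible_at m P \<longleftrightarrow>
     (\<forall>p::nat. prime p \<and> p < m \<longrightarrow> \<not> (int p dvd fst P \<and> int p dvd snd P))"

definition Sbar :: "(nat \<Rightarrow> real) \<Rightarrow> nat \<Rightarrow> nat \<Rightarrow> real" where
  "Sbar X n k = (1 / real n) * (\<Sum>i=1..n. \<Prod>j=i..i+k-1. X j)"

definition Zbar :: "(nat \<Rightarrow> real) \<Rightarrow> nat \<Rightarrow> real" where
  "Zbar Z n = (1 / real n) * (\<Sum>i=1..n. Z i)"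

end

theory Submission
  imports Defs
begin

text \<open>Visibility only makes the indicators decrease: \<open>X i \<le> X i(m)\<close>. For \<open>0 \<le> b \<le> a \<le> 1\<close>
  a telescoping argument bounds a difference of products by the sum of the factor differences,
  so each window of length \<open>k\<close> contributes at most \<open>\<Sum>j<k. Z (i + j)\<close>. Summing over
  \<open>i = 1..n\<close>, every shifted sum \<open>\<Sum>i=1..n. Z (i + t)\<close> exceeds \<open>\<Sum>i=1..n. Z i\<close> by at most
  \<open>t\<close>, since \<open>0 \<le> Z \<le> 1\<close>; the overhangs add up to \<open>\<Sum>t<k. t \<le> k\<^sup>2/2\<close>.\<close>

lemma visible_imp_visible_at: "visible P \<Longrightarrow> visible_at m P"
  unfolding visible_def visible_at_def
proof (intro allI impI notI)
  fix p :: nat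
  assume "gcd (fst P) (snd P) = 1" and "prime p \<and> p < m"
    and "int p dvd fst P \<and> int p dvd snd P"
  then have "int p dvd 1" by (metis gcd_greatest)
  with \<open>prime p \<and> p < m\<close> show False by simp
qed

lemma prod_diff_le_sum_diff:
  fixes a b :: "'i \<Rightarrow> 'a::linordered_idom"
  assumes "finite S" "\<And>x. 0 \<le> b x" "\<And>x. b x \<le> a x" "\<And>x. a x \<le> 1"
  shows "prod a S - prod b S \<le> (\<Sum>x\<in>S. a x - b x)"
  using assms(1)
proof (induction S rule: finite_induct)
  case empty
  then show ?case by simp
next
  case (insert x F)
  have b_nonneg: "0 \<le> prod b F" by (rule prod_nonneg) (use assms in auto)
  have b_le_a: "prod b F \<le> prod a F" by (rule prod_mono) (use assms in auto)
  have a_le_1: "prod a F \<le> 1"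
    by (rule prod_le_1) (use assms in \<open>auto intro: order_trans[OF assms(2) assms(3)]\<close>)
  have "prod a (insert x F) - prod b (insert x F)
      = a x * (prod a F - prod b F) + (a x - b x) * prod b F"
    using insert by (simp add: algebra_simps)
  also have "\<dots> \<le> (prod a F - prod b F) + (a x - b x)"
  proof -
    have "a x * (prod a F - prod b F) \<le> 1 * (prod a F - prod b F)"
      by (rule mult_right_mono) (use assms b_le_a in auto)
    moreover have "(a x - b x) * prod b F \<le> (a x - b x) * 1"
      by (rule mult_left_mono) (use assms b_nonneg b_le_a a_le_1 in auto)
    ultimately show ?thesis by simp
  qed
  also have "\<dots> \<le> (\<Sum>y\<in>F. a y - b y) + (a x - b x)"
    using insert by simp
  finally show ?case using insert by simp
qed

lemma sum_shift_le:
  fixes Z :: "nat \<Rightarrow> real"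
  assumes "\<And>x. 0 \<le> Z x" "\<And>x. Z x \<le> 1"
  shows "(\<Sum>i=1..n. Z (i + t)) \<le> (\<Sum>i=1..n. Z i) + real t"
proof (induction t)
  case 0
  then show ?case by simp
next
  case (Suc t)
  show ?case
  proof (cases n)
    case 0
    then show ?thesis by simp
  next
    case (Suc n')
    have "(\<Sum>i=1..n. Z (i + Suc t)) = (\<Sum>i=1..n. Z (i + t)) - Z (1 + t) + Z (n + t + 1)"
      unfolding Suc by (induction n') (simp_all add: sum.atLeast_Suc_atMost algebra_simps)
    then show ?thesis
      using Suc.IH assms[of "1 + t"] assms[of "n + t + 1"] by simp
  qed
qed

lemma sum_window_eq_sum_lessThan:
  fixes f :: "nat \<Rightarrow> 'a::comm_monoid_add"
  assumes "k \<ge> 1"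
  shows "(\<Sum>j=i..i+k-1. f j) = (\<Sum>t<k. f (i + t))"
proof -
  have "{i..i+k-1} = {i..<i+k}" using assms by auto
  then show ?thesis
    using sum.shift_bounds_nat_ivl[of f 0 i k] by (simp add: atLeast0LessThan add.commute)
qed

lemma sum_lessThan_of_nat_le: "(\<Sum>t<k. real t) \<le> real k ^ 2 / 2"
  by (induction k) (simp_all add: power2_eq_square algebra_simps)

lemma sum_window_prod_diff_le:
  fixes a b :: "nat \<Rightarrow> real"
  assumes "k \<ge> 1" "\<And>x. 0 \<le> b x" "\<And>x. b x \<le> a x" "\<And>x. a x \<le> 1"
  shows "(\<Sum>i=1..n. \<Prod>j=i..i+k-1. a j) - (\<Sum>i=1..n. \<Prod>j=i..i+k-1. b j)
         \<le> real k * (\<Sum>i=1..n. a i - b i) + real k ^ 2 / 2"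
proof -
  have diff_bounds: "0 \<le> a x - b x" "a x - b x \<le> 1" for x
    using assms(2-4)[of x] by auto
  have "(\<Sum>i=1..n. \<Prod>j=i..i+k-1. a j) - (\<Sum>i=1..n. \<Prod>j=i..i+k-1. b j)
      = (\<Sum>i=1..n. (\<Prod>j=i..i+k-1. a j) - (\<Prod>j=i..i+k-1. b j))"
    by (simp add: sum_subtractf)
  also have "\<dots> \<le> (\<Sum>i=1..n. \<Sum>j=i..i+k-1. a j - b j)"
    by (intro sum_mono prod_diff_le_sum_diff) (use assms in auto)
  also have "\<dots> = (\<Sum>i=1..n. \<Sum>t<k. a (i + t) - b (i + t))"
    by (simp only: sum_window_eq_sum_lessThan[OF assms(1)])
  also have "\<dots> = (\<Sum>t<k. \<Sum>i=1..n. a (i + t) - b (i + t))"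
    by (rule sum.swap)
  also have "\<dots> \<le> (\<Sum>t<k. (\<Sum>i=1..n. a i - b i) + real t)"
    by (intro sum_mono sum_shift_le[of "\<lambda>i. a i - b i"]) (use diff_bounds in auto)
  also have "\<dots> \<le> real k * (\<Sum>i=1..n. a i - b i) + real k ^ 2 / 2"
    using sum_lessThan_of_nat_le[of k] by (simp add: sum.distrib)
  finally show ?thesis .
qed

lemma Sbar_mono:
  assumes "\<And>x. 0 \<le> b x" "\<And>x. b x \<le> a x"
  shows "Sbar b n k \<le> Sbar a n k"
  unfolding Sbar_def
  by (intro mult_left_mono sum_mono prod_mono) (use assms in auto)

lemma Sbar_diff_le:
  fixes a b :: "nat \<Rightarrow> real"
  assumes "k \<ge> 1" "n \<ge> 1" "\<And>x. 0 \<le> b x" "\<And>x. b x \<le> a x" "\<And>x. a x \<le> 1"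
  shows "Sbar a n k - Sbar b n k \<le> real k * Zbar (\<lambda>i. a i - b i) n + real k ^ 2 / (2 * real n)"
proof -
  have n_pos: "real n > 0" using assms(2) by simp
  have "Sbar a n k - Sbar b n k
      = ((\<Sum>i=1..n. \<Prod>j=i..i+k-1. a j) - (\<Sum>i=1..n. \<Prod>j=i..i+k-1. b j)) / real n"
    unfolding Sbar_def by (simp add: diff_divide_distrib)
  also have "\<dots> \<le> (real k * (\<Sum>i=1..n. a i - b i) + real k ^ 2 / 2) / real n"
    using sum_window_prod_diff_le[OF assms(1,3-5)] n_pos by (simp add: divide_right_mono)
  also have "\<dots> = real k * Zbar (\<lambda>i. a i - b i) n + real k ^ 2 / (2 * real n)"
    unfolding Zbar_def using n_pos by (simp add: field_simps)
  finally show ?thesis .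
qed

theorem lemma7:
  fixes P :: "nat \<Rightarrow> int \<times> int" and k m n :: nat
  assumes "k \<ge> 1" and "m \<ge> 1" and "n \<ge> 1"
  defines "X \<equiv> (\<lambda>i. if visible (P i) then (1::real) else 0)"
      and "Xm \<equiv> (\<lambda>i. if visible_at m (P i) then (1::real) else 0)"
  defines "Z \<equiv> (\<lambda>i. Xm i - X i)"
  shows "Sbar Xm n k - real k * Zbar Z n - real k ^ 2 / (2 * real n) \<le> Sbar X n k
         \<and> Sbar X n k \<le> Sbar Xm n k"
proof -
  have X_nonneg: "\<And>x. 0 \<le> X x" and X_le_Xm: "\<And>x. X x \<le> Xm x" and Xm_le_1: "\<And>x. Xm x \<le> 1"
    using visible_imp_visible_at unfolding X_def Xm_def by auto
  have "Sbar Xm n k - Sbar X n k \<le> real k * Zbar Z n + real k ^ 2 / (2 * real n)"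
    unfolding Z_def by (rule Sbar_diff_le) (use assms X_nonneg X_le_Xm Xm_le_1 in auto)
  moreover have "Sbar X n k \<le> Sbar Xm n k"
    by (rule Sbar_mono) (use X_nonneg X_le_Xm in auto)
  ultimately show ?thesis by linarith
qed

end
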